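(* In the setting of the context, let $\mathcal S=(O_1,\dots,O_M)\in\mathcal Z^M$, let $m\in\{1,\dots,M\}$ and $O'_m\in\mathcal Z$, and let $\mathcal S^m$ be $\mathcal S$ with $O_m$ replaced by $O'_m$. Run SGD for $T$ steps on $\mathcal S$ and on $\mathcal S^m$ from the same initialization $\Psi_0$ and with the same index sequence $j_0,\dots,j_{T-1}$. Then $$\mathbb E_A\big[\|\Psi_{\mathcal S,T}-\Psi_{\mathcal S^m,T}\|_2\big]\le\frac{2\beta'\sqrt d}{M}\sum_{t=1}^T(1+\beta' d)^{t-1},$$ and consequently, for every $O\in\mathcal Z$, $$\big|\mathbb E_A[\mathcal L(O,\Psi_{\mathcal S,T})-\mathcal L(O,\Psi_{\mathcal S^m,T})]\big|\le\frac{2\beta\beta' d}{M}\sum_{t=1}^T(1+\beta' d)^{t-1}.$$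
   Context: An instance is a binary vector in $\{0,1\}^D$ formed by concatenating $d$ one-hot vectors, so it has exactly $d$ ones. Each instance $i$ is represented by $u_i=\sum_{i'}c_{ii'}x_{i'}$, a convex combination (weights $c_{ii'}\ge0$ summing to $1$) of such binary vectors; hence $u_i\in[0,1]^D$, $\|u_i\|_1\le d$. A proxy datum is a finite nonempty list $O=((u_1,y_1),\dots,(u_n,y_n))$ of such vectors with labels $y_i\in\mathcal Y$; $\mathcal Z$ is the set of all proxy data. The model predicts $h(u;\Psi)=\sigma(u\cdot\Psi)$, $\Psi\in\mathbb R^D$, $\sigma$ the logistic sigmoid, and $\mathcal L(O,\Psi)=\frac1n\sum_{i=1}^n l(y_i,h(u_i;\Psi))$ with $l$ differentiable in its second argument. Assumptions: (A1) $|l(y,a)-l(y,b)|\le\beta|a-b|$ for all $y,a,b$; (A2) for all $y,y'$, all admissible $u,u'$ and all $\Psi,\Psi'$, $\|\nabla_\Psi l(y,h(u;\Psi))-\nabla_\Psi l(y',h(u';\Psi'))\|_2\le\beta'\|\nabla_\Psi h(u;\Psi)-\nabla_\Psi h(u';\Psi')\|_2$. SGD with step size $\alpha\in(0,1]$ on a sequence $\mathcal S=(O_1,\dots,O_M)$: indices $j_0,\dots,j_{T-1}$ are drawn i.i.d. uniformly from $\{1,\dots,M\}$ (expectation $\mathbb E_A$ is over these indices), and $\Psi_{\mathcal S,t+1}=\Psi_{\mathcal S,t}-\alpha\nabla_\Psi\mathcal L(O_{j_t},\Psi_{\mathcal S,t})$, $\Psi_{\mathcal S,0}=\Psi_0$.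 *)

theory Defs
  imports "HOL-Analysis.Analysis"
begin

text \<open>Index type 'n of coordinates (so D = CARD('n)); the coordinates are partitioned
  into d blocks by blk :: 'n => nat (block k is {i. blk i = k}, k < d).\<close>

definition valid_blocks :: "('n::finite \<Rightarrow> nat) \<Rightarrow> nat \<Rightarrow> bool" where
  "valid_blocks blk d \<longleftrightarrow> (\<forall>i. blk i < d) \<and> (\<forall>k<d. \<exists>i. blk i = k)"

definition instances :: "('n::finite \<Rightarrow> nat) \<Rightarrow> nat \<Rightarrow> (real^'n) set" where
  "instances blk d = {x. (\<forall>i. x$i = 0 \<or> x$i = 1) \<and>
                         (\<forall>k<d. card {i. blk i = k \<and> x$i = 1} = 1)}"

definition admissible :: "('n::finite \<Rightarrow> nat) \<Rightarrow> nat \<Rightarrow> (real^'n) set" where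
  "admissible blk d = convex hull (instances blk d)"

definition proxy_data :: "('n::finite \<Rightarrow> nat) \<Rightarrow> nat \<Rightarrow> ((real^'n) \<times> 'y) list set" where
  "proxy_data blk d = {Ob. Ob \<noteq> [] \<and> (\<forall>p\<in>set Ob. fst p \<in> admissible blk d)}"

definition sigmoid :: "real \<Rightarrow> real" where
  "sigmoid z = 1 / (1 + exp (- z))"

definition model :: "real^'n \<Rightarrow> real^'n \<Rightarrow> real" where
  "model u \<Psi> = sigmoid (u \<bullet> \<Psi>)"

definition loss :: "('y \<Rightarrow> real \<Rightarrow> real) \<Rightarrow> ((real^'n) \<times> 'y) list \<Rightarrow> real^'n \<Rightarrow> real" where
  "loss l Ob \<Psi> = (\<Sum>p\<leftarrow>Ob. l (snd p) (model (fst p) \<Psi>)) / real (length Ob)"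

definition grad :: "('a::euclidean_space \<Rightarrow> real) \<Rightarrow> 'a \<Rightarrow> 'a" where
  "grad f x = (THE g. (f has_derivative (\<lambda>v. g \<bullet> v)) (at x))"

text \<open>SGD iterate after processing indices js = [j_0,...,j_{T-1}] (0-based indices into S).\<close>
definition sgd :: "('y \<Rightarrow> real \<Rightarrow> real) \<Rightarrow> real \<Rightarrow> ((real^'n) \<times> 'y) list list
                   \<Rightarrow> real^'n \<Rightarrow> nat list \<Rightarrow> real^'n" where
  "sgd l \<alpha> S \<Psi>0 js = foldl (\<lambda>\<Psi> j. \<Psi> - \<alpha> *\<^sub>R grad (loss l (S ! j)) \<Psi>) \<Psi>0 js"

text \<open>Expectation over i.i.d. uniform indices j_0..j_{T-1} in {0..<M}.\<close>
definition expect_A :: "nat \<Rightarrow> nat \<Rightarrow> (nat list \<Rightarrow> real) \<Rightarrow> real" where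
  "expect_A M T f = (\<Sum>js\<in>{js. length js = T \<and> set js \<subseteq> {..<M}}. f js) / real M ^ T"

end

theory Submission
  imports Defs
begin

text \<open>The gradient of \<open>\<Psi> \<mapsto> \<sigma>(u\<bullet>\<Psi>)\<close> is \<open>\<sigma>'(u\<bullet>\<Psi>) u\<close> with \<open>0 \<le> \<sigma>' \<le> 1/4\<close> and \<open>\<sigma>'\<close>
  1-Lipschitz, and every admissible \<open>u\<close> lies in the hypersimplex \<open>[0,1]\<^sup>D \<inter> {\<Sum>u = d}\<close>,
  so \<open>\<parallel>u\<parallel>\<^sup>2 \<le> d\<close>. Hence, by (A2), the gradient of each proxy loss is \<open>\<beta>'d\<close>-Lipschitz, and
  gradients of two different proxy losses differ by at most \<open>2\<beta>'\<surd>d\<close>. Running SGD on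
  \<open>\<S>\<close> and \<open>\<S>\<^sup>m\<close> with the same indices, one step therefore multiplies the distance of the
  iterates by at most \<open>1 + \<beta>'d\<close> and, only when index \<open>m\<close> is drawn (probability \<open>1/M\<close>),
  adds \<open>2\<beta>'\<surd>d\<close>. Unrolling the resulting recursion for the expectation gives the
  geometric sum; the loss bound follows because each proxy loss is \<open>\<beta>\<surd>d\<close>-Lipschitz.\<close>

definition sigmoid' :: "real \<Rightarrow> real" where
  "sigmoid' z = sigmoid z * (1 - sigmoid z)"

lemma sigmoid_bounds: "0 < sigmoid z" "sigmoid z < 1"
  unfolding sigmoid_def by (auto simp: divide_simps add_pos_pos)

lemma sigmoid_has_real_derivative: "(sigmoid has_real_derivative sigmoid' z) (at z)"
proof -
  have pos: "1 + exp (-z) > 0" by (smt (verit) exp_gt_zero)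
  have "((\<lambda>z. 1 / (1 + exp (- z))) has_real_derivative
        - (exp (-z) * (-1)) / ((1 + exp (-z)) * (1 + exp (-z)))) (at z)"
    using pos by (auto intro!: derivative_eq_intros)
  moreover have "- (exp (-z) * (-1)) / ((1 + exp (-z)) * (1 + exp (-z))) = sigmoid' z"
    unfolding sigmoid'_def sigmoid_def using pos by (simp add: field_simps)
  ultimately show ?thesis unfolding sigmoid_def[abs_def] by simp
qed

lemma sigmoid'_bounds: "0 \<le> sigmoid' z" "sigmoid' z \<le> 1/4"
proof -
  show "0 \<le> sigmoid' z" unfolding sigmoid'_def using sigmoid_bounds[of z] by simp
  have "0 \<le> (sigmoid z - 1/2)^2" by simp
  then show "sigmoid' z \<le> 1/4" unfolding sigmoid'_def by (simp add: power2_eq_square algebra_simps)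
qed

lemma sigmoid_lipschitz: "\<bar>sigmoid a - sigmoid b\<bar> \<le> \<bar>a - b\<bar>"
proof -
  have ordered: "\<bar>sigmoid b - sigmoid a\<bar> \<le> \<bar>b - a\<bar>" if "a < b" for a b :: real
  proof -
    obtain z where "sigmoid b - sigmoid a = (b - a) * sigmoid' z"
      using MVT2[OF \<open>a < b\<close>, of sigmoid sigmoid'] sigmoid_has_real_derivative by blast
    moreover have "\<bar>sigmoid' z\<bar> \<le> 1" using sigmoid'_bounds[of z] by simp
    ultimately show ?thesis by (simp add: abs_mult mult_left_le)
  qed
  show ?thesis
    using ordered[of a b] ordered[of b a] by (cases a b rule: linorder_cases) (auto simp: abs_minus_commute)
qed

lemma sigmoid'_lipschitz: "\<bar>sigmoid' a - sigmoid' b\<bar> \<le> \<bar>a - b\<bar>"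
proof -
  have "sigmoid' a - sigmoid' b = (sigmoid a - sigmoid b) * (1 - sigmoid a - sigmoid b)"
    unfolding sigmoid'_def by (simp add: algebra_simps)
  moreover have "\<bar>1 - sigmoid a - sigmoid b\<bar> \<le> 1"
    using sigmoid_bounds[of a] sigmoid_bounds[of b] by auto
  ultimately have "\<bar>sigmoid' a - sigmoid' b\<bar> \<le> \<bar>sigmoid a - sigmoid b\<bar>"
    by (simp add: abs_mult mult_left_le)
  then show ?thesis using sigmoid_lipschitz[of a b] by linarith
qed

lemma sigmoid'_neq_sigmoid'_0: "z \<noteq> 0 \<Longrightarrow> sigmoid' z \<noteq> sigmoid' 0"
proof
  assume "z \<noteq> 0" and eq: "sigmoid' z = sigmoid' 0"
  have "sigmoid' 0 = 1/4" unfolding sigmoid'_def sigmoid_def by simp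
  with eq have "(sigmoid z - 1/2)^2 = 0"
    unfolding sigmoid'_def by (simp add: power2_eq_square algebra_simps)
  then have "exp (-z) = 1" unfolding sigmoid_def by (simp add: field_simps)
  with \<open>z \<noteq> 0\<close> show False by simp
qed

lemma grad_eqI:
  fixes f :: "'a::euclidean_space \<Rightarrow> real"
  assumes "(f has_derivative (\<lambda>v. g \<bullet> v)) (at x)"
  shows "grad f x = g"
  unfolding grad_def
proof (rule the_equality)
  fix g' assume "(f has_derivative (\<lambda>v. g' \<bullet> v)) (at x)"
  from has_derivative_unique[OF this assms] have "\<And>v. g' \<bullet> v = g \<bullet> v" by metis
  from this[of "g' - g"] have "(g' - g) \<bullet> (g' - g) = 0" by (simp add: inner_diff_left)
  then show "g' = g" by simp
qed (rule assms)

lemma model_has_derivative: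
  "(model u has_derivative (\<lambda>v. (sigmoid' (u \<bullet> \<Psi>) *\<^sub>R u) \<bullet> v)) (at \<Psi>)"
proof -
  have "((\<lambda>\<Psi>. sigmoid (u \<bullet> \<Psi>)) has_derivative (\<lambda>v. (u \<bullet> v) * sigmoid' (u \<bullet> \<Psi>))) (at \<Psi>)"
    by (rule DERIV_compose_FDERIV[OF sigmoid_has_real_derivative])
       (rule bounded_linear.has_derivative[OF bounded_linear_inner_right has_derivative_ident])
  then show ?thesis unfolding model_def[abs_def] by (simp add: mult.commute)
qed

lemma grad_model: "grad (model u) \<Psi> = sigmoid' (u \<bullet> \<Psi>) *\<^sub>R u"
  by (rule grad_eqI[OF model_has_derivative])

lemma has_derivative_comp_model:
  assumes "\<And>a. f differentiable (at a)"
  shows "((\<lambda>\<Psi>. f (model u \<Psi>)) has_derivative (\<lambda>v. grad (\<lambda>\<Psi>. f (model u \<Psi>)) \<Psi> \<bullet> v)) (at \<Psi>)"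
proof -
  have "(f has_real_derivative deriv f (model u \<Psi>)) (at (model u \<Psi>))"
    using assms DERIV_deriv_iff_real_differentiable by blast
  from DERIV_compose_FDERIV[OF this model_has_derivative]
  have "((\<lambda>\<Psi>. f (model u \<Psi>)) has_derivative
          (\<lambda>v. ((deriv f (model u \<Psi>) * sigmoid' (u \<bullet> \<Psi>)) *\<^sub>R u) \<bullet> v)) (at \<Psi>)"
    by (simp add: algebra_simps)
  then show ?thesis by (simp only: grad_eqI)
qed

lemma has_derivative_sum_list:
  assumes "\<And>p. p \<in> set xs \<Longrightarrow> (F p has_derivative (\<lambda>v. G p \<bullet> v)) (at x)"
  shows "((\<lambda>\<Psi>. \<Sum>p\<leftarrow>xs. F p \<Psi>) has_derivative (\<lambda>v. (\<Sum>p\<leftarrow>xs. G p) \<bullet> v)) (at x)"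
  using assms
proof (induction xs)
  case Nil
  then show ?case by simp
next
  case (Cons a xs)
  then have "((\<lambda>\<Psi>. F a \<Psi> + (\<Sum>p\<leftarrow>xs. F p \<Psi>)) has_derivative
               (\<lambda>v. G a \<bullet> v + (\<Sum>p\<leftarrow>xs. G p) \<bullet> v)) (at x)"
    by (intro has_derivative_add) auto
  then show ?case by (simp add: inner_add_left)
qed

lemma grad_loss:
  assumes "\<And>y a. l y differentiable (at a)"
  shows "grad (loss l Ob) \<Psi>
           = (1 / real (length Ob)) *\<^sub>R (\<Sum>p\<leftarrow>Ob. grad (\<lambda>\<Psi>. l (snd p) (model (fst p) \<Psi>)) \<Psi>)"
proof -
  let ?G = "\<Sum>p\<leftarrow>Ob. grad (\<lambda>\<Psi>. l (snd p) (model (fst p) \<Psi>)) \<Psi>"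
  have "((\<lambda>\<Psi>. \<Sum>p\<leftarrow>Ob. l (snd p) (model (fst p) \<Psi>)) has_derivative (\<lambda>v. ?G \<bullet> v)) (at \<Psi>)"
    using has_derivative_comp_model[OF assms] by (rule has_derivative_sum_list)
  from has_derivative_mult_right[OF this, of "1 / real (length Ob)"]
  have "(loss l Ob has_derivative (\<lambda>v. ((1 / real (length Ob)) *\<^sub>R ?G) \<bullet> v)) (at \<Psi>)"
    unfolding loss_def[abs_def] by simp
  then show ?thesis by (rule grad_eqI)
qed

section \<open>Admissible vectors lie in a hypersimplex\<close>

definition hypersimplex :: "nat \<Rightarrow> (real^'n::finite) set" where
  "hypersimplex d = {u. (\<forall>i. 0 \<le> u$i \<and> u$i \<le> 1) \<and> (\<Sum>i\<in>UNIV. u$i) = real d}"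

lemma convex_hypersimplex: "convex (hypersimplex d)"
proof (rule convexI)
  fix x y :: "real^'n" and a b :: real
  assume "x \<in> hypersimplex d" "y \<in> hypersimplex d" and ab: "0 \<le> a" "0 \<le> b" "a + b = 1"
  then have x: "\<And>i. 0 \<le> x $ i \<and> x $ i \<le> 1" "(\<Sum>i\<in>UNIV. x $ i) = real d"
    and y: "\<And>i. 0 \<le> y $ i \<and> y $ i \<le> 1" "(\<Sum>i\<in>UNIV. y $ i) = real d"
    unfolding hypersimplex_def by auto
  have "a * x $ i + b * y $ i \<le> a + b" for i
    using x y ab by (intro add_mono) (auto simp: mult_left_le)
  moreover have "(\<Sum>i\<in>UNIV. a * x $ i + b * y $ i) = (a + b) * real d"
    using x y by (simp add: sum.distrib sum_distrib_left[symmetric] distrib_right)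
  ultimately show "a *\<^sub>R x + b *\<^sub>R y \<in> hypersimplex d"
    unfolding hypersimplex_def using x y ab by simp
qed

lemma instances_subset_hypersimplex:
  assumes "valid_blocks blk d"
  shows "instances blk d \<subseteq> hypersimplex d"
proof
  fix x assume "x \<in> instances blk d"
  then have x01: "\<And>i. x$i = 0 \<or> x$i = 1"
    and one_hot: "\<And>k. k < d \<Longrightarrow> card {i. blk i = k \<and> x$i = 1} = 1"
    unfolding instances_def by auto
  have "(\<Sum>i\<in>UNIV. x$i) = (\<Sum>i\<in>UNIV. if x$i = 1 then 1 else 0)"
    by (rule sum.cong) (use x01 in auto)
  also have "\<dots> = real (card {i. x$i = 1})"
    by (simp add: sum.If_cases)
  also have "{i. x$i = 1} = (\<Union>k<d. {i. blk i = k \<and> x$i = 1})"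
    using assms unfolding valid_blocks_def by auto
  also have "card \<dots> = (\<Sum>k<d. card {i. blk i = k \<and> x$i = 1})"
    by (rule card_UN_disjoint) auto
  also have "\<dots> = d" using one_hot by simp
  finally have "(\<Sum>i\<in>UNIV. x$i) = real d" .
  moreover have "0 \<le> x$i \<and> x$i \<le> 1" for i
    using x01[of i] by auto
  ultimately show "x \<in> hypersimplex d"
    unfolding hypersimplex_def by simp
qed

lemma admissible_subset_hypersimplex:
  "valid_blocks blk d \<Longrightarrow> admissible blk d \<subseteq> hypersimplex d"
  unfolding admissible_def
  by (intro hull_minimal instances_subset_hypersimplex convex_hypersimplex)

lemma norm_le_sqrt_if_hypersimplex:
  assumes "u \<in> hypersimplex d"
  shows "norm u \<le> sqrt (real d)"
proof -
  have u: "\<And>i. 0 \<le> u$i \<and> u$i \<le> 1" "(\<Sum>i\<in>UNIV. u$i) = real d"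
    using assms unfolding hypersimplex_def by auto
  have "(norm u)\<^sup>2 = (\<Sum>i\<in>UNIV. u$i * u$i)"
    by (simp add: power2_norm_eq_inner inner_vec_def)
  also have "\<dots> \<le> real d"
    unfolding u(2)[symmetric] by (rule sum_mono) (use u in \<open>simp add: mult_left_le\<close>)
  finally show ?thesis by (intro real_le_rsqrt)
qed

lemma nonzero_if_hypersimplex: "u \<in> hypersimplex d \<Longrightarrow> 0 < d \<Longrightarrow> u \<noteq> 0"
  unfolding hypersimplex_def by auto

lemma norm_sum_list_le:
  fixes f :: "'a \<Rightarrow> 'b::real_normed_vector"
  shows "norm (\<Sum>p\<leftarrow>xs. f p) \<le> (\<Sum>p\<leftarrow>xs. norm (f p))"
  by (induction xs) (auto intro: order_trans[OF norm_triangle_ineq])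

lemma sum_list_const_scaleR:
  fixes c :: "'b::real_vector"
  shows "(\<Sum>p\<leftarrow>xs. c) = real (length xs) *\<^sub>R c"
  by (induction xs) (auto simp: algebra_simps)

lemma norm_mean_le:
  fixes f :: "'a \<Rightarrow> 'b::real_normed_vector"
  assumes "xs \<noteq> []" "\<And>p. p \<in> set xs \<Longrightarrow> norm (f p) \<le> B"
  shows "norm ((1 / real (length xs)) *\<^sub>R (\<Sum>p\<leftarrow>xs. f p)) \<le> B"
proof -
  have "norm (\<Sum>p\<leftarrow>xs. f p) \<le> (\<Sum>p\<leftarrow>xs. norm (f p))" by (rule norm_sum_list_le)
  also have "\<dots> \<le> (\<Sum>p\<leftarrow>xs. B)" using assms(2) by (intro sum_list_mono) auto
  finally have "norm (\<Sum>p\<leftarrow>xs. f p) \<le> real (length xs) * B" by (simp add: sum_list_triv)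
  then show ?thesis using assms(1) by (simp add: field_simps)
qed

lemma mean_minus_const:
  fixes f :: "'a \<Rightarrow> 'b::real_normed_vector"
  assumes "xs \<noteq> []"
  shows "(1 / real (length xs)) *\<^sub>R (\<Sum>p\<leftarrow>xs. f p) - c
       = (1 / real (length xs)) *\<^sub>R (\<Sum>p\<leftarrow>xs. f p - c)"
  using assms by (simp add: sum_list_subtractf sum_list_const_scaleR scaleR_diff_right)

lemma norm_mean_diff_le:
  fixes a b :: "'a \<Rightarrow> 'b::real_normed_vector"
  assumes "xs \<noteq> []" "ys \<noteq> []" "\<And>p q. p \<in> set xs \<Longrightarrow> q \<in> set ys \<Longrightarrow> norm (a p - b q) \<le> B"
  shows "norm ((1 / real (length xs)) *\<^sub>R (\<Sum>p\<leftarrow>xs. a p)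
              - (1 / real (length ys)) *\<^sub>R (\<Sum>q\<leftarrow>ys. b q)) \<le> B"
  unfolding mean_minus_const[OF assms(1)]
proof (rule norm_mean_le[OF assms(1)])
  fix p assume "p \<in> set xs"
  have "norm ((1 / real (length ys)) *\<^sub>R (\<Sum>q\<leftarrow>ys. b q - a p)) \<le> B"
    using assms(3)[OF \<open>p \<in> set xs\<close>]
    by (intro norm_mean_le[OF assms(2)]) (simp add: norm_minus_commute)
  then show "norm (a p - (1 / real (length ys)) *\<^sub>R (\<Sum>q\<leftarrow>ys. b q)) \<le> B"
    by (simp add: mean_minus_const[OF assms(2), symmetric] norm_minus_commute)
qed

lemma norm_mean_diff_pointwise_le:
  fixes a b :: "'a \<Rightarrow> 'b::real_normed_vector"
  assumes "xs \<noteq> []" "\<And>p. p \<in> set xs \<Longrightarrow> norm (a p - b p) \<le> B"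
  shows "norm ((1 / real (length xs)) *\<^sub>R (\<Sum>p\<leftarrow>xs. a p)
              - (1 / real (length xs)) *\<^sub>R (\<Sum>p\<leftarrow>xs. b p)) \<le> B"
  using norm_mean_le[OF assms(1), of "\<lambda>p. a p - b p"] assms(2)
  by (simp add: sum_list_subtractf scaleR_diff_right)

section \<open>Expectation over uniformly drawn index sequences\<close>

lemma index_sequences_Suc:
  "{js. length js = Suc T \<and> set js \<subseteq> {..<M}}
   = (\<lambda>(js, j). js @ [j]) ` ({js. length js = T \<and> set js \<subseteq> {..<M}} \<times> {..<M})"
proof (intro equalityI subsetI)
  fix xs assume "xs \<in> {js. length js = Suc T \<and> set js \<subseteq> {..<M}}"
  then have xs: "length xs = Suc T" "set xs \<subseteq> {..<M}" and "xs \<noteq> []" by auto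
  then have "xs = butlast xs @ [last xs]" "set (butlast xs) \<subseteq> {..<M}" "last xs < M"
    by (auto dest: in_set_butlastD) (use last_in_set in blast)
  with xs show "xs \<in> (\<lambda>(js, j). js @ [j]) ` ({js. length js = T \<and> set js \<subseteq> {..<M}} \<times> {..<M})"
    by (intro image_eqI[of _ _ "(butlast xs, last xs)"]) auto
qed auto

lemma expect_A_0: "expect_A M 0 f = f []"
proof -
  have "{js. length js = 0 \<and> set js \<subseteq> {..<M}} = {[]}" by auto
  then show ?thesis unfolding expect_A_def by simp
qed

lemma expect_A_Suc:
  assumes "0 < M"
  shows "expect_A M (Suc T) f = expect_A M T (\<lambda>js. (\<Sum>j<M. f (js @ [j])) / real M)"
proof -
  let ?A = "{js. length js = T \<and> set js \<subseteq> {..<M}}"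
  have "inj_on (\<lambda>(js, j). js @ [j]) (?A \<times> {..<M})" by (auto simp: inj_on_def)
  then have "sum f {js. length js = Suc T \<and> set js \<subseteq> {..<M}} = (\<Sum>(js, j)\<in>?A \<times> {..<M}. f (js @ [j]))"
    unfolding index_sequences_Suc by (subst sum.reindex) (simp_all add: case_prod_beta)
  also have "\<dots> = (\<Sum>js\<in>?A. \<Sum>j<M. f (js @ [j]))"
    by (simp add: sum.cartesian_product)
  finally have "sum f {js. length js = Suc T \<and> set js \<subseteq> {..<M}} = (\<Sum>js\<in>?A. \<Sum>j<M. f (js @ [j]))" .
  then show ?thesis
    unfolding expect_A_def using assms by (simp add: sum_divide_distrib[symmetric] field_simps)
qed

lemma expect_A_mono:
  assumes "\<And>js. length js = T \<Longrightarrow> set js \<subseteq> {..<M} \<Longrightarrow> f js \<le> g js"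
  shows "expect_A M T f \<le> expect_A M T g"
  unfolding expect_A_def by (intro divide_right_mono sum_mono) (use assms in auto)

lemma expect_A_affine:
  assumes "0 < M"
  shows "expect_A M T (\<lambda>js. c * f js + k) = c * expect_A M T f + k"
proof -
  have "{js. length js = T \<and> set js \<subseteq> {..<M}} = {js. set js \<subseteq> {..<M} \<and> length js = T}" by auto
  then have "card {js. length js = T \<and> set js \<subseteq> {..<M}} = M ^ T"
    by (simp add: card_lists_length_eq)
  with assms show ?thesis unfolding expect_A_def
    by (simp add: sum.distrib sum_distrib_left[symmetric] field_simps)
qed

lemma abs_expect_A_le: "\<bar>expect_A M T f\<bar> \<le> expect_A M T (\<lambda>js. \<bar>f js\<bar>)"
  unfolding expect_A_def by (simp add: abs_div_pos sum_abs divide_right_mono)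

lemma sum_power_atLeast1_atMost_Suc:
  "(\<Sum>t=1..Suc T. (r::real) ^ (t - 1)) = 1 + r * (\<Sum>t=1..T. r ^ (t - 1))"
proof (induction T)
  case (Suc T)
  have "(\<Sum>t=1..Suc (Suc T). r ^ (t - 1)) = (\<Sum>t=1..Suc T. r ^ (t - 1)) + r ^ Suc T" by simp
  also have "\<dots> = 1 + r * ((\<Sum>t=1..T. r ^ (t - 1)) + r ^ T)"
    by (simp only: Suc.IH) (simp add: algebra_simps)
  also have "(\<Sum>t=1..T. r ^ (t - 1)) + r ^ T = (\<Sum>t=1..Suc T. r ^ (t - 1))" by simp
  finally show ?case .
qed simp

lemma expect_A_le_geometric:
  assumes "m < M" "0 \<le> r" "D [] = 0"
    and step: "\<And>js j. j < M \<Longrightarrow> D (js @ [j]) \<le> r * D js + (if j = m then K else 0)"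
  shows "expect_A M T D \<le> K / M * (\<Sum>t=1..T. r ^ (t - 1))"
proof (induction T)
  case 0
  show ?case by (simp add: expect_A_0 \<open>D [] = 0\<close>)
next
  case (Suc T)
  have M: "0 < M" using \<open>m < M\<close> by simp
  have "expect_A M (Suc T) D = expect_A M T (\<lambda>js. (\<Sum>j<M. D (js @ [j])) / real M)"
    by (rule expect_A_Suc[OF M])
  also have "\<dots> \<le> expect_A M T (\<lambda>js. r * D js + K / M)"
  proof (rule expect_A_mono)
    fix js :: "nat list"
    have "(\<Sum>j<M. D (js @ [j])) \<le> (\<Sum>j<M. r * D js + (if j = m then K else 0))"
      by (rule sum_mono) (use step in auto)
    also have "\<dots> = M * (r * D js) + K" using \<open>m < M\<close> by (simp add: sum.distrib)
    finally show "(\<Sum>j<M. D (js @ [j])) / real M \<le> r * D js + K / M"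
      using M by (simp add: divide_simps algebra_simps)
  qed
  also have "\<dots> = r * expect_A M T D + K / M" by (rule expect_A_affine[OF M])
  also have "\<dots> \<le> r * (K / M * (\<Sum>t=1..T. r ^ (t - 1))) + K / M"
    using mult_left_mono[OF Suc.IH \<open>0 \<le> r\<close>] by simp
  also have "\<dots> = K / M * (\<Sum>t=1..Suc T. r ^ (t - 1))"
    unfolding sum_power_atLeast1_atMost_Suc by (simp add: algebra_simps)
  finally show ?case .
qed

lemma abs_expect_A_le_mult:
  assumes "0 < M" "\<And>js. \<bar>f js\<bar> \<le> c * g js"
  shows "\<bar>expect_A M T f\<bar> \<le> c * expect_A M T g"
proof -
  have "\<bar>expect_A M T f\<bar> \<le> expect_A M T (\<lambda>js. \<bar>f js\<bar>)"
    by (rule abs_expect_A_le)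
  also have "\<dots> \<le> expect_A M T (\<lambda>js. c * g js + 0)"
    using assms(2) by (intro expect_A_mono) simp
  also have "\<dots> = c * expect_A M T g"
    using expect_A_affine[OF assms(1), of T c g 0] by simp
  finally show ?thesis .
qed

section \<open>Lipschitz estimates for the proxy loss\<close>

locale logistic_proxy_loss =
  fixes blk :: "'n::finite \<Rightarrow> nat" and d :: nat
    and l :: "'y \<Rightarrow> real \<Rightarrow> real" and \<beta> \<beta>' :: real
  assumes blocks: "valid_blocks blk d"
    and differentiable: "\<And>y a. l y differentiable (at a)"
    and lipschitz: "\<And>y a b. \<bar>l y a - l y b\<bar> \<le> \<beta> * \<bar>a - b\<bar>"
    and grad_lipschitz: "\<And>y y' u u' \<Psi> \<Psi>'. u \<in> admissible blk d \<Longrightarrow> u' \<in> admissible blk d \<Longrightarrow>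
          norm (grad (\<lambda>\<Psi>. l y (model u \<Psi>)) \<Psi> - grad (\<lambda>\<Psi>. l y' (model u' \<Psi>)) \<Psi>')
          \<le> \<beta>' * norm (grad (model u) \<Psi> - grad (model u') \<Psi>')"
begin

lemma nonneg_beta: "0 \<le> \<beta>"
  using lipschitz[of undefined 1 0] by simp

lemma norm_admissible_le: "u \<in> admissible blk d \<Longrightarrow> norm u \<le> sqrt d"
  using admissible_subset_hypersimplex[OF blocks] norm_le_sqrt_if_hypersimplex by blast

lemma norm_grad_model_le:
  assumes "u \<in> admissible blk d"
  shows "norm (grad (model u) \<Psi>) \<le> sqrt d"
proof -
  have "norm (grad (model u) \<Psi>) = sigmoid' (u \<bullet> \<Psi>) * norm u"
    using sigmoid'_bounds by (simp add: grad_model)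
  also have "\<dots> \<le> 1 * sqrt d"
    using sigmoid'_bounds[of "u \<bullet> \<Psi>"] norm_admissible_le[OF assms] by (intro mult_mono) auto
  finally show ?thesis by simp
qed

lemma norm_grad_model_diff_le:
  assumes "u \<in> admissible blk d"
  shows "norm (grad (model u) \<Psi> - grad (model u) \<Psi>') \<le> d * norm (\<Psi> - \<Psi>')"
proof -
  have "norm (grad (model u) \<Psi> - grad (model u) \<Psi>') = \<bar>sigmoid' (u \<bullet> \<Psi>) - sigmoid' (u \<bullet> \<Psi>')\<bar> * norm u"
    by (simp add: grad_model scaleR_diff_left[symmetric])
  also have "\<dots> \<le> \<bar>u \<bullet> \<Psi> - u \<bullet> \<Psi>'\<bar> * norm u"
    by (intro mult_right_mono sigmoid'_lipschitz) simp
  also have "\<dots> \<le> (norm u * norm (\<Psi> - \<Psi>')) * norm u"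
    using Cauchy_Schwarz_ineq2[of u "\<Psi> - \<Psi>'"] by (intro mult_right_mono) (auto simp: inner_diff_right)
  also have "\<dots> = (norm u)\<^sup>2 * norm (\<Psi> - \<Psi>')" by (simp add: power2_eq_square)
  also have "\<dots> \<le> d * norm (\<Psi> - \<Psi>')"
    using power_mono[OF norm_admissible_le[OF assms] norm_ge_zero, of 2] by (intro mult_right_mono) auto
  finally show ?thesis .
qed

text \<open>Apply (A2) with \<open>u = u'\<close> at \<open>\<Psi> = 0\<close>, \<open>\<Psi>' = u\<close>: the left side is a norm, and the right
  side is \<open>\<beta>'\<close> times a positive number since \<open>\<sigma>'(u\<bullet>u) \<noteq> \<sigma>'(0)\<close>.\<close>
lemma nonneg_beta':
  assumes "u \<in> admissible blk d"
  shows "0 \<le> \<beta>'"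
proof -
  have "0 < d" using blocks unfolding valid_blocks_def by (metis neq0_conv not_less0)
  then have "u \<noteq> 0"
    using admissible_subset_hypersimplex[OF blocks] assms nonzero_if_hypersimplex by blast
  then have "0 < norm (grad (model u) 0 - grad (model u) u)"
    using sigmoid'_neq_sigmoid'_0[of "u \<bullet> u"] by (simp add: grad_model scaleR_diff_left[symmetric])
  moreover have "0 \<le> \<beta>' * norm (grad (model u) 0 - grad (model u) u)"
    using grad_lipschitz[OF assms assms, where \<Psi>=0 and \<Psi>'=u] norm_ge_zero order_trans by blast
  ultimately show ?thesis by (simp add: zero_le_mult_iff)
qed

lemma proxy_data_nonneg_beta': "Ob \<in> proxy_data blk d \<Longrightarrow> 0 \<le> \<beta>'"
  unfolding proxy_data_def using nonneg_beta' by (auto simp: neq_Nil_conv)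

lemma grad_loss_lipschitz:
  assumes Ob: "Ob \<in> proxy_data blk d"
  shows "norm (grad (loss l Ob) \<Psi> - grad (loss l Ob) \<Psi>') \<le> \<beta>' * d * norm (\<Psi> - \<Psi>')"
  unfolding grad_loss[OF differentiable]
proof (rule norm_mean_diff_pointwise_le)
  show "Ob \<noteq> []" using Ob unfolding proxy_data_def by simp
  fix p assume "p \<in> set Ob"
  then have u: "fst p \<in> admissible blk d" using Ob unfolding proxy_data_def by simp
  have "norm (grad (\<lambda>\<Psi>. l (snd p) (model (fst p) \<Psi>)) \<Psi> - grad (\<lambda>\<Psi>. l (snd p) (model (fst p) \<Psi>)) \<Psi>')
      \<le> \<beta>' * norm (grad (model (fst p)) \<Psi> - grad (model (fst p)) \<Psi>')"
    by (rule grad_lipschitz[OF u u])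
  also have "\<dots> \<le> \<beta>' * (d * norm (\<Psi> - \<Psi>'))"
    using norm_grad_model_diff_le[OF u] proxy_data_nonneg_beta'[OF Ob] by (rule mult_left_mono)
  finally show "norm (grad (\<lambda>\<Psi>. l (snd p) (model (fst p) \<Psi>)) \<Psi> - grad (\<lambda>\<Psi>. l (snd p) (model (fst p) \<Psi>)) \<Psi>')
      \<le> \<beta>' * d * norm (\<Psi> - \<Psi>')" by (simp add: mult.assoc)
qed

lemma norm_grad_loss_diff_le:
  assumes Ob: "Ob \<in> proxy_data blk d" and Ob': "Ob' \<in> proxy_data blk d"
  shows "norm (grad (loss l Ob) \<Psi> - grad (loss l Ob') \<Psi>') \<le> 2 * \<beta>' * sqrt d"
  unfolding grad_loss[OF differentiable]
proof (rule norm_mean_diff_le)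
  show "Ob \<noteq> []" "Ob' \<noteq> []" using Ob Ob' unfolding proxy_data_def by auto
  fix p q assume "p \<in> set Ob" "q \<in> set Ob'"
  then have u: "fst p \<in> admissible blk d" and u': "fst q \<in> admissible blk d"
    using Ob Ob' unfolding proxy_data_def by auto
  have "norm (grad (\<lambda>\<Psi>. l (snd p) (model (fst p) \<Psi>)) \<Psi> - grad (\<lambda>\<Psi>. l (snd q) (model (fst q) \<Psi>)) \<Psi>')
      \<le> \<beta>' * norm (grad (model (fst p)) \<Psi> - grad (model (fst q)) \<Psi>')"
    by (rule grad_lipschitz[OF u u'])
  also have "\<dots> \<le> \<beta>' * (sqrt d + sqrt d)"
  proof (rule mult_left_mono[OF _ proxy_data_nonneg_beta'[OF Ob]])
    show "norm (grad (model (fst p)) \<Psi> - grad (model (fst q)) \<Psi>') \<le> sqrt d + sqrt d"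
      using norm_triangle_ineq4[of "grad (model (fst p)) \<Psi>" "grad (model (fst q)) \<Psi>'"]
        norm_grad_model_le[OF u, of \<Psi>] norm_grad_model_le[OF u', of \<Psi>'] by linarith
  qed
  finally show "norm (grad (\<lambda>\<Psi>. l (snd p) (model (fst p) \<Psi>)) \<Psi> - grad (\<lambda>\<Psi>. l (snd q) (model (fst q) \<Psi>)) \<Psi>')
      \<le> 2 * \<beta>' * sqrt d" by simp
qed

lemma loss_lipschitz:
  assumes Ob: "Ob \<in> proxy_data blk d"
  shows "\<bar>loss l Ob \<Psi> - loss l Ob \<Psi>'\<bar> \<le> \<beta> * sqrt d * norm (\<Psi> - \<Psi>')"
proof -
  have "norm ((1 / real (length Ob)) *\<^sub>R (\<Sum>p\<leftarrow>Ob. l (snd p) (model (fst p) \<Psi>))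
            - (1 / real (length Ob)) *\<^sub>R (\<Sum>p\<leftarrow>Ob. l (snd p) (model (fst p) \<Psi>')))
        \<le> \<beta> * sqrt d * norm (\<Psi> - \<Psi>')"
  proof (rule norm_mean_diff_pointwise_le)
    show "Ob \<noteq> []" using Ob unfolding proxy_data_def by simp
    fix p assume "p \<in> set Ob"
    then have u: "fst p \<in> admissible blk d" using Ob unfolding proxy_data_def by simp
    have "\<bar>l (snd p) (model (fst p) \<Psi>) - l (snd p) (model (fst p) \<Psi>')\<bar>
        \<le> \<beta> * \<bar>fst p \<bullet> \<Psi> - fst p \<bullet> \<Psi>'\<bar>"
      using lipschitz sigmoid_lipschitz nonneg_beta unfolding model_def
      by (meson mult_left_mono order_trans)
    also have "\<dots> \<le> \<beta> * (norm (fst p) * norm (\<Psi> - \<Psi>'))"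
      using Cauchy_Schwarz_ineq2[of "fst p" "\<Psi> - \<Psi>'"] nonneg_beta
      by (intro mult_left_mono) (auto simp: inner_diff_right)
    also have "\<dots> \<le> \<beta> * (sqrt d * norm (\<Psi> - \<Psi>'))"
      using norm_admissible_le[OF u] nonneg_beta by (intro mult_left_mono mult_right_mono) auto
    finally show "norm (l (snd p) (model (fst p) \<Psi>) - l (snd p) (model (fst p) \<Psi>'))
        \<le> \<beta> * sqrt d * norm (\<Psi> - \<Psi>')" by (simp add: mult.assoc)
  qed
  then show ?thesis by (simp add: loss_def)
qed

lemma gradient_step_dist_le:
  assumes "Ob \<in> proxy_data blk d" "Ob' \<in> proxy_data blk d" "0 < \<alpha>" "\<alpha> \<le> 1"
  shows "norm ((\<Psi> - \<alpha> *\<^sub>R grad (loss l Ob) \<Psi>) - (\<Phi> - \<alpha> *\<^sub>R grad (loss l Ob') \<Phi>))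
         \<le> (1 + \<beta>' * d) * norm (\<Psi> - \<Phi>) + (if Ob = Ob' then 0 else 2 * \<beta>' * sqrt d)"
proof -
  have \<beta>': "0 \<le> \<beta>'" using proxy_data_nonneg_beta'[OF assms(1)] .
  have "(\<Psi> - \<alpha> *\<^sub>R grad (loss l Ob) \<Psi>) - (\<Phi> - \<alpha> *\<^sub>R grad (loss l Ob') \<Phi>)
      = (\<Psi> - \<Phi>) - \<alpha> *\<^sub>R (grad (loss l Ob) \<Psi> - grad (loss l Ob') \<Phi>)"
    by (simp add: algebra_simps)
  then have "norm ((\<Psi> - \<alpha> *\<^sub>R grad (loss l Ob) \<Psi>) - (\<Phi> - \<alpha> *\<^sub>R grad (loss l Ob') \<Phi>))
      \<le> norm (\<Psi> - \<Phi>) + norm (\<alpha> *\<^sub>R (grad (loss l Ob) \<Psi> - grad (loss l Ob') \<Phi>))"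
    by (simp only: norm_triangle_ineq4)
  also have "\<dots> = norm (\<Psi> - \<Phi>) + \<alpha> * norm (grad (loss l Ob) \<Psi> - grad (loss l Ob') \<Phi>)"
    using assms(3) by simp
  also have "\<dots> \<le> norm (\<Psi> - \<Phi>) + norm (grad (loss l Ob) \<Psi> - grad (loss l Ob') \<Phi>)"
    using assms(3,4) by (simp add: mult_left_le_one_le)
  also have "\<dots> \<le> (1 + \<beta>' * d) * norm (\<Psi> - \<Phi>) + (if Ob = Ob' then 0 else 2 * \<beta>' * sqrt d)"
  proof (cases "Ob = Ob'")
    case True
    then show ?thesis using grad_loss_lipschitz[OF assms(1), of \<Psi> \<Phi>] by (simp add: algebra_simps)
  next
    case False
    have "0 \<le> \<beta>' * d * norm (\<Psi> - \<Phi>)" using \<beta>' by simp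
    then show ?thesis
      using False norm_grad_loss_diff_le[OF assms(1,2), of \<Psi> \<Phi>] by (simp add: distrib_right)
  qed
  finally show ?thesis .
qed

end

section \<open>Uniform stability of SGD\<close>

context logistic_proxy_loss
begin

lemma sgd_replace_snoc_dist_le:
  assumes S: "\<forall>Ob\<in>set S. Ob \<in> proxy_data blk d" and O': "O' \<in> proxy_data blk d"
    and "j < length S" "0 < \<alpha>" "\<alpha> \<le> 1"
  shows "norm (sgd l \<alpha> S \<Psi>0 (js @ [j]) - sgd l \<alpha> (S[m := O']) \<Psi>0 (js @ [j]))
         \<le> (1 + \<beta>' * d) * norm (sgd l \<alpha> S \<Psi>0 js - sgd l \<alpha> (S[m := O']) \<Psi>0 js)
            + (if j = m then 2 * \<beta>' * sqrt d else 0)"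
proof -
  have S': "S[m := O'] ! j = (if j = m then O' else S ! j)"
    using \<open>j < length S\<close> by simp
  have Sj: "S ! j \<in> proxy_data blk d"
    using S \<open>j < length S\<close> nth_mem by blast
  then have "S[m := O'] ! j \<in> proxy_data blk d"
    using O' unfolding S' by simp
  from gradient_step_dist_le[OF Sj this \<open>0 < \<alpha>\<close> \<open>\<alpha> \<le> 1\<close>]
  have "norm (sgd l \<alpha> S \<Psi>0 (js @ [j]) - sgd l \<alpha> (S[m := O']) \<Psi>0 (js @ [j]))
        \<le> (1 + \<beta>' * d) * norm (sgd l \<alpha> S \<Psi>0 js - sgd l \<alpha> (S[m := O']) \<Psi>0 js)
           + (if S ! j = S[m := O'] ! j then 0 else 2 * \<beta>' * sqrt d)"
    by (simp add: sgd_def)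
  moreover have "(if S ! j = S[m := O'] ! j then 0 else 2 * \<beta>' * sqrt d)
                 \<le> (if j = m then 2 * \<beta>' * sqrt d else 0)"
    using proxy_data_nonneg_beta'[OF O'] S' by simp
  ultimately show ?thesis by linarith
qed

lemma expect_A_sgd_replace_dist_le:
  assumes "\<forall>Ob\<in>set S. Ob \<in> proxy_data blk d" "O' \<in> proxy_data blk d"
    and "m < length S" "0 < \<alpha>" "\<alpha> \<le> 1"
  shows "expect_A (length S) T (\<lambda>js. norm (sgd l \<alpha> S \<Psi>0 js - sgd l \<alpha> (S[m := O']) \<Psi>0 js))
         \<le> 2 * \<beta>' * sqrt d / length S * (\<Sum>t=1..T. (1 + \<beta>' * d) ^ (t - 1))"
proof (rule expect_A_le_geometric[OF \<open>m < length S\<close>])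
  show "0 \<le> 1 + \<beta>' * d" using proxy_data_nonneg_beta'[OF assms(2)] by simp
qed (use assms sgd_replace_snoc_dist_le in \<open>simp_all add: sgd_def\<close>)

lemma abs_expect_A_loss_diff_le:
  assumes "Ob \<in> proxy_data blk d" "0 < M"
  shows "\<bar>expect_A M T (\<lambda>js. loss l Ob (P js) - loss l Ob (Q js))\<bar>
         \<le> \<beta> * sqrt d * expect_A M T (\<lambda>js. norm (P js - Q js))"
  using assms(2) loss_lipschitz[OF assms(1)] by (rule abs_expect_A_le_mult)

end

theorem mainTheorem3:
  fixes blk :: "'n::finite \<Rightarrow> nat" and d :: nat
    and l :: "'y \<Rightarrow> real \<Rightarrow> real" and \<beta> \<beta>' \<alpha> :: real
    and S :: "((real^'n) \<times> 'y) list list" and M m T :: nat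
    and O' :: "((real^'n) \<times> 'y) list" and \<Psi>0 :: "real^'n"
  assumes blocks: "valid_blocks blk d"
    and diff: "\<And>y a. l y differentiable (at a)"
    and A1: "\<And>y a b. \<bar>l y a - l y b\<bar> \<le> \<beta> * \<bar>a - b\<bar>"
    and A2: "\<And>y y' u u' \<Psi> \<Psi>'. u \<in> admissible blk d \<Longrightarrow> u' \<in> admissible blk d \<Longrightarrow>
              norm (grad (\<lambda>\<Psi>. l y (model u \<Psi>)) \<Psi> - grad (\<lambda>\<Psi>. l y' (model u' \<Psi>)) \<Psi>')
              \<le> \<beta>' * norm (grad (model u) \<Psi> - grad (model u') \<Psi>')"
    and alpha: "0 < \<alpha>" "\<alpha> \<le> 1"
    and S: "length S = M" "\<forall>Ob\<in>set S. Ob \<in> proxy_data blk d"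
    and m: "m < M"
    and O': "O' \<in> proxy_data blk d"
  shows "expect_A M T (\<lambda>js. norm (sgd l \<alpha> S \<Psi>0 js - sgd l \<alpha> (S[m := O']) \<Psi>0 js))
           \<le> 2 * \<beta>' * sqrt d / M * (\<Sum>t=1..T. (1 + \<beta>' * d) ^ (t - 1))
       \<and> (\<forall>Ob\<in>proxy_data blk d.
           \<bar>expect_A M T (\<lambda>js. loss l Ob (sgd l \<alpha> S \<Psi>0 js) - loss l Ob (sgd l \<alpha> (S[m := O']) \<Psi>0 js))\<bar>
           \<le> 2 * \<beta> * \<beta>' * d / M * (\<Sum>t=1..T. (1 + \<beta>' * d) ^ (t - 1)))"
proof -
  interpret logistic_proxy_loss blk d l \<beta> \<beta>'
    using blocks diff A1 A2 by unfold_locales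
  let ?G = "\<Sum>t=1..T. (1 + \<beta>' * d) ^ (t - 1)"
  have dist: "expect_A M T (\<lambda>js. norm (sgd l \<alpha> S \<Psi>0 js - sgd l \<alpha> (S[m := O']) \<Psi>0 js))
                \<le> 2 * \<beta>' * sqrt d / M * ?G"
    using expect_A_sgd_replace_dist_le[OF S(2) O' _ alpha] m S(1) by blast
  have "\<bar>expect_A M T (\<lambda>js. loss l Ob (sgd l \<alpha> S \<Psi>0 js) - loss l Ob (sgd l \<alpha> (S[m := O']) \<Psi>0 js))\<bar>
        \<le> 2 * \<beta> * \<beta>' * d / M * ?G"
    if "Ob \<in> proxy_data blk d" for Ob
  proof -
    have "\<bar>expect_A M T (\<lambda>js. loss l Ob (sgd l \<alpha> S \<Psi>0 js) - loss l Ob (sgd l \<alpha> (S[m := O']) \<Psi>0 js))\<bar>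
          \<le> \<beta> * sqrt d * expect_A M T (\<lambda>js. norm (sgd l \<alpha> S \<Psi>0 js - sgd l \<alpha> (S[m := O']) \<Psi>0 js))"
      using m by (intro abs_expect_A_loss_diff_le[OF that]) simp
    also have "\<dots> \<le> \<beta> * sqrt d * (2 * \<beta>' * sqrt d / M * ?G)"
      using dist nonneg_beta by (intro mult_left_mono) auto
    also have "\<dots> = 2 * \<beta> * \<beta>' * (sqrt d * sqrt d) / M * ?G"
      by (simp add: algebra_simps)
    finally show ?thesis by simp
  qed
  with dist show ?thesis by blast
qed

end
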